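(* Under the Depth-First Leader-Follower (DFLF) strategy in an environment $R$ with a single door $s$ (as defined in the context), the following holds for every pixel $q\in R$ and every time $t$. If $q$ is unoccupied at both time $t$ and time $t+1$, then $q$ was never occupied at any time before $t$.
   Context: Pixels are the unit squares of the integer grid, identified with their lower-left corners $(i,j)\in\mathbb{Z}^2$. Two pixels are neighbors if they share an edge, so $(i,j)$ has the four neighbors $(i\pm1,j)$ and $(i,j\pm1)$. The environment $R$ is a finite set of pixels that is connected under this neighbor relation. It contains a single distinguished door pixel $s\in R$. Time is discrete, $t=0,1,2,\dots$. At each time, every pixel of $R$ holds at most one robot. $p(r,t)$ denotes the pixel occupied by robot $r$ at time $t$, and $\mathrm{prev}(r,t)=p(r,t-1)$. In one time step a robot either stays where it is or moves to a neighboring pixel of $R$ that is unoccupied. Vacating rule: if a robot occupies pixel $q$ at time $t$ and a different pixel at time $t+1$, then no robot occupies $q$ at time $t+1$; so the earliest a vacated pixel can be re-entered is time $t+2$. At time $0$ exactly one robot is present, on $s$. Door rule: whenever the robot on $s$ leaves, a new robot appears on $s$ as soon as the vacating rule allows. A pixel of $R$ is a frontier pixel at time $t$ if no robot has occupied it at any time $\le t$. The DFLF strategy works as follows. - Each robot is either moving or stopped. A moving robot is either the leader or a follower. - The first robot is the leader. Each newly appearing robot becomes the successor of the robot that most recently left the door, and that robot becomes its predecessor $\mathrm{pred}(r)$. These relations never change. - At each step, the leader behaves as follows. If the leader has a neighboring frontier pixel, it moves to one of them (chosen arbitrarily). Otherwise it becomes stopped permanently and leadership passes to its successor. If the leader has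 no frontier neighbor and is on the door $s$, the algorithm halts. - A follower $r$ moves at time $t$ to the pixel $\mathrm{prev}(\mathrm{pred}(r),t)$ previously occupied by its predecessor. - A stopped robot never moves again. Makespan: the first time $t^*$ at which every pixel of $R$ is occupied. *)

theory Defs
  imports Main
begin

text \<open>Pixels are identified with their lower-left corners in the integer grid.\<close>
type_synonym pixel = "int \<times> int"

definition nbr :: "pixel \<Rightarrow> pixel \<Rightarrow> bool" where
  "nbr p q \<longleftrightarrow> \<bar>fst p - fst q\<bar> + \<bar>snd p - snd q\<bar> = 1"

definition grid_connected :: "pixel set \<Rightarrow> bool" where
  "grid_connected R \<longleftrightarrow>
     (\<forall>p\<in>R. \<forall>q\<in>R. (\<lambda>a b. a \<in> R \<and> b \<in> R \<and> nbr a b)\<^sup>*\<^sup>* p q)"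

text \<open>Robots are numbered
  in order of appearance (robot 0 is the first robot).
  rpos r  : pixel of robot r at the current time (None = not yet appeared)
  rprev r : pixel of robot r at the previous time (None = not present then)
  nrob    : number of robots that have appeared
  rpred r : predecessor of robot r (meaningful for r > 0)
  stopped : set of stopped robots
  leader  : current leader (None = leadership passed to a successor that has
            not appeared yet)
  last_stopped : the robot that most recently became stopped
  last_left    : the robot that most recently left the door
  visited : pixels occupied at some time up to now
  halted  : the algorithm has halted\<close>
record config =
  rpos :: "nat \<Rightarrow> pixel option"
  rprev :: "nat \<Rightarrow> pixel option"
  nrob :: nat
  rpred :: "nat \<Rightarrow> nat"
  stopped :: "nat set"
  leader :: "nat option"
  last_stopped :: nat
  last_left :: nat
  visited :: "pixel set"
  halted :: bool

definition occupied :: "config \<Rightarrow> pixel \<Rightarrow> bool" where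
  "occupied c q \<longleftrightarrow> (\<exists>r. rpos c r = Some q)"

definition dflf_init :: "pixel \<Rightarrow> config" where
  "dflf_init s = \<lparr> rpos = (\<lambda>r. if r = 0 then Some s else None), rprev = (\<lambda>r. None),
     nrob = 1, rpred = (\<lambda>r. 0), stopped = {}, leader = Some 0, last_stopped = 0,
     last_left = 0, visited = {s}, halted = False \<rparr>"

definition frontier_nbrs :: "pixel set \<Rightarrow> config \<Rightarrow> pixel \<Rightarrow> pixel set" where
  "frontier_nbrs R c p = {q. q \<in> R \<and> nbr p q \<and> q \<notin> visited c}"

definition leader_choice_ok :: "pixel set \<Rightarrow> config \<Rightarrow> pixel option \<Rightarrow> bool" where
  "leader_choice_ok R c mv \<longleftrightarrow>
     (case leader c of
        None \<Rightarrow> mv = None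
      | Some L \<Rightarrow>
          (if frontier_nbrs R c (the (rpos c L)) = {} then mv = None
           else (\<exists>q. mv = Some q \<and> q \<in> frontier_nbrs R c (the (rpos c L)))))"

definition successor_of :: "config \<Rightarrow> nat \<Rightarrow> nat option" where
  "successor_of c L =
     (if \<exists>r. r < nrob c \<and> 0 < r \<and> rpred c r = L
      then Some (SOME r. r < nrob c \<and> 0 < r \<and> rpred c r = L) else None)"

definition halting :: "pixel set \<Rightarrow> pixel \<Rightarrow> config \<Rightarrow> bool" where
  "halting R s c \<longleftrightarrow>
     (\<exists>L. leader c = Some L \<and> frontier_nbrs R c (the (rpos c L)) = {} \<and> rpos c L = Some s)"

definition dflf_next :: "pixel \<Rightarrow> config \<Rightarrow> pixel option \<Rightarrow> config" where
  "dflf_next s c mv = (let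
     stops = (leader c \<noteq> None \<and> mv = None);
     stopped1 = (if stops then insert (the (leader c)) (stopped c) else stopped c);
     leader1 = (if stops then successor_of c (the (leader c)) else leader c);
     last_stopped1 = (if stops then the (leader c) else last_stopped c);
     pos1 = (\<lambda>r. if r < nrob c \<and> leader c = Some r then
                   (case mv of Some q \<Rightarrow> Some q | None \<Rightarrow> rpos c r)
                 else if r < nrob c \<and> r \<notin> stopped c then
                   (case rprev c (rpred c r) of Some x \<Rightarrow> Some x | None \<Rightarrow> rpos c r)
                 else rpos c r);
     last_left1 = (if \<exists>r. rpos c r = Some s \<and> pos1 r \<noteq> Some s
                   then (SOME r. rpos c r = Some s \<and> pos1 r \<noteq> Some s) else last_left c);
     appear = (\<not> occupied c s \<and> (\<forall>r. pos1 r \<noteq> Some s));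
     n = nrob c;
     pos2 = (if appear then pos1(n := Some s) else pos1);
     leader2 = (if appear \<and> leader1 = None \<and> last_left1 = last_stopped1 then Some n else leader1)
   in \<lparr> rpos = pos2, rprev = rpos c, nrob = (if appear then Suc n else n),
        rpred = (if appear then (rpred c)(n := last_left1) else rpred c),
        stopped = stopped1, leader = leader2, last_stopped = last_stopped1,
        last_left = last_left1, visited = visited c \<union> {q. \<exists>r. pos2 r = Some q},
        halted = False \<rparr>)"

definition dflf_step :: "pixel set \<Rightarrow> pixel \<Rightarrow> config \<Rightarrow> config \<Rightarrow> bool" where
  "dflf_step R s c c' \<longleftrightarrow>
     (if halted c then c' = c
      else if halting R s c then c' = c\<lparr>halted := True\<rparr>
      else (\<exists>mv. leader_choice_ok R c mv \<and> c' = dflf_next s c mv))"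

definition dflf_run :: "pixel set \<Rightarrow> pixel \<Rightarrow> (nat \<Rightarrow> config) \<Rightarrow> bool" where
  "dflf_run R s \<sigma> \<longleftrightarrow> \<sigma> 0 = dflf_init s \<and> (\<forall>t. dflf_step R s (\<sigma> t) (\<sigma> (Suc t)))"

end

theory Submission
  imports Defs
begin

text \<open>Under DFLF the robots present form a chain numbered in order of appearance: robot
  r+1 follows robot r, the robots below the leader are stopped, and only the newest robot
  can stand on the door or have just left it.  Hence whenever a moving robot vacates a
  pixel, the next step refills it: a follower steps into the pixel its predecessor just
  left, and the door, vacated by the newest robot, receives a new robot.  By induction,
  every pixel occupied so far is occupied now or was vacated in the last step, and a pixel
  of the latter kind is occupied again one step later.  So a pixel empty at two consecutive
  times was never occupied before.\<close>

text \<open>The let-bound intermediates pos1, appear and last_left1 of dflf_next: the positions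
  after the moves of the leader and the followers, before a new robot enters at the door.\<close>

definition moved_pos :: "config \<Rightarrow> pixel option \<Rightarrow> nat \<Rightarrow> pixel option" where
  "moved_pos c mv = (\<lambda>r. if r < nrob c \<and> leader c = Some r then
                   (case mv of Some q \<Rightarrow> Some q | None \<Rightarrow> rpos c r)
                 else if r < nrob c \<and> r \<notin> stopped c then
                   (case rprev c (rpred c r) of Some x \<Rightarrow> Some x | None \<Rightarrow> rpos c r)
                 else rpos c r)"

definition robot_appears :: "pixel \<Rightarrow> config \<Rightarrow> pixel option \<Rightarrow> bool" where
  "robot_appears s c mv \<longleftrightarrow> \<not> occupied c s \<and> (\<forall>r. moved_pos c mv r \<noteq> Some s)"

definition next_last_left :: "pixel \<Rightarrow> config \<Rightarrow> pixel option \<Rightarrow> nat" where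
  "next_last_left s c mv =
     (if \<exists>r. rpos c r = Some s \<and> moved_pos c mv r \<noteq> Some s
      then (SOME r. rpos c r = Some s \<and> moved_pos c mv r \<noteq> Some s) else last_left c)"

lemma dflf_next_simps:
  shows "rpos (dflf_next s c mv) =
      (if robot_appears s c mv then (moved_pos c mv)(nrob c := Some s) else moved_pos c mv)"
    and "nrob (dflf_next s c mv) = (if robot_appears s c mv then Suc (nrob c) else nrob c)"
    and "rpred (dflf_next s c mv) =
      (if robot_appears s c mv then (rpred c)(nrob c := next_last_left s c mv) else rpred c)"
    and "stopped (dflf_next s c mv) =
      (if leader c \<noteq> None \<and> mv = None then insert (the (leader c)) (stopped c) else stopped c)"
    and "last_left (dflf_next s c mv) = next_last_left s c mv"
    and "halted (dflf_next s c mv) = False"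
  unfolding dflf_next_def Let_def moved_pos_def robot_appears_def next_last_left_def
  by simp_all

lemma rprev_dflf_next: "rprev (dflf_next s c mv) = rpos c"
  by (simp add: dflf_next_def Let_def)

lemma visited_dflf_next:
  "visited (dflf_next s c mv) = visited c \<union> {q. \<exists>r. rpos (dflf_next s c mv) r = Some q}"
  by (simp add: dflf_next_def Let_def)

lemma dflf_next_leader:
  "leader (dflf_next s c mv) =
     (let stops = (leader c \<noteq> None \<and> mv = None);
          leader1 = (if stops then successor_of c (the (leader c)) else leader c);
          last_stopped1 = (if stops then the (leader c) else last_stopped c)
      in if robot_appears s c mv \<and> leader1 = None \<and> next_last_left s c mv = last_stopped1
         then Some (nrob c) else leader1)"
  unfolding dflf_next_def Let_def moved_pos_def robot_appears_def next_last_left_def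
  by simp

definition vacated :: "config \<Rightarrow> pixel set" where
  "vacated c = {q. \<exists>r. rprev c r = Some q \<and> rpos c r \<noteq> Some q}"

text \<open>Pixels vacated in a halted configuration are never refilled; excluding them is harmless
  because a run halts only when nothing was vacated.\<close>

definition visited_covered :: "config \<Rightarrow> bool" where
  "visited_covered c \<longleftrightarrow>
     visited c \<subseteq> {q. occupied c q} \<union> (if halted c then {} else vacated c)"

locale dflf_inv =
  fixes s :: pixel and c :: config
  assumes rpos_absent: "\<And>r. nrob c \<le> r \<Longrightarrow> rpos c r = None"
    and rprev_absent: "\<And>r. nrob c \<le> r \<Longrightarrow> rprev c r = None"
    and rpos_present: "\<And>r. r < nrob c \<Longrightarrow> rpos c r \<noteq> None"
    and rprev_present: "\<And>r. Suc r < nrob c \<Longrightarrow> rprev c r \<noteq> None"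
    and rpred_eq: "\<And>r. 0 < r \<Longrightarrow> r < nrob c \<Longrightarrow> rpred c r = r - 1"
    and leader_present: "\<exists>k. leader c = Some k \<and> k < nrob c"
    and stopped_eq: "\<And>k. leader c = Some k \<Longrightarrow> stopped c = {..<k}"
    and stopped_still: "\<And>k r. leader c = Some k \<Longrightarrow> r < k \<Longrightarrow> rprev c r = rpos c r"
    and rpos_door: "\<And>r. rpos c r = Some s \<Longrightarrow> Suc r = nrob c \<and> rprev c r = None"
    and rprev_door: "\<And>r. rprev c r = Some s \<Longrightarrow> Suc r = nrob c"
    and door_left: "\<not> occupied c s \<Longrightarrow> rprev c (nrob c - 1) = Some s \<and> last_left c = nrob c - 1"
    and door_visited: "s \<in> visited c"
    and rpos_visited: "\<And>r q. rpos c r = Some q \<Longrightarrow> q \<in> visited c"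

lemma dflf_inv_init: "dflf_inv s (dflf_init s)"
  by unfold_locales (auto simp: dflf_init_def occupied_def split: if_splits)

lemma dflf_inv_halt: "dflf_inv s c \<Longrightarrow> dflf_inv s (c\<lparr>halted := True\<rparr>)"
  unfolding dflf_inv_def occupied_def by simp

context dflf_inv
begin

lemma vacated_empty_if_halting:
  assumes "halting R s c"
  shows "vacated c = {}"
proof -
  obtain k where k: "leader c = Some k" "rpos c k = Some s"
    using assms by (auto simp: halting_def)
  have "rpos c r = Some q" if "rprev c r = Some q" for r q
  proof -
    consider "r < k" | "r = k" | "nrob c \<le> r"
      using rpos_door[OF k(2)] by linarith
    then show ?thesis
      by cases (use that k stopped_still rpos_door rprev_absent in auto)
  qed
  then show ?thesis by (auto simp: vacated_def)
qed

end

locale dflf_move = dflf_inv +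
  fixes R :: "pixel set" and mv :: "pixel option" and k :: nat
  assumes not_halting: "\<not> halting R s c"
    and choice: "leader_choice_ok R c mv"
    and leader: "leader c = Some k"
begin

lemma leader_bound: "k < nrob c"
  using leader_present leader by auto

lemma stopping_leader_off_door: "mv = None \<Longrightarrow> rpos c k \<noteq> Some s"
  using choice not_halting leader
  by (auto simp: leader_choice_ok_def halting_def split: if_splits)

lemma leader_target_off_door: "mv = Some q \<Longrightarrow> q \<noteq> s"
  using choice leader door_visited
  by (auto simp: leader_choice_ok_def frontier_nbrs_def split: if_splits)

lemma moved_pos_stopped: "r < k \<Longrightarrow> moved_pos c mv r = rpos c r"
  using leader leader_bound stopped_eq[OF leader] by (simp add: moved_pos_def)

lemma moved_pos_leader:
  "moved_pos c mv k = (case mv of Some q \<Rightarrow> Some q | None \<Rightarrow> rpos c k)"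
  using leader leader_bound by (simp add: moved_pos_def)

lemma moved_pos_follower:
  assumes "k < r" "r < nrob c"
  shows "moved_pos c mv r = rprev c (r - 1)"
proof -
  obtain x where "rprev c (r - 1) = Some x"
    using rprev_present[of "r - 1"] assms by auto
  then show ?thesis
    using assms leader stopped_eq[OF leader] rpred_eq[of r] by (simp add: moved_pos_def)
qed

lemma moved_pos_absent: "nrob c \<le> r \<Longrightarrow> moved_pos c mv r = None"
  using rpos_absent by (simp add: moved_pos_def)

lemma robot_index_cases:
  obtains "r < k" | "r = k" | "k < r" "r < nrob c" | "nrob c \<le> r"
  by linarith

lemma moved_pos_not_door: "moved_pos c mv r \<noteq> Some s"
proof (cases r rule: robot_index_cases)
  case 1
  then show ?thesis using moved_pos_stopped rpos_door leader_bound by fastforce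
next
  case 2
  then show ?thesis
    using moved_pos_leader stopping_leader_off_door leader_target_off_door by (cases mv) auto
next
  case 3
  then show ?thesis using moved_pos_follower rprev_door by fastforce
next
  case 4
  then show ?thesis using moved_pos_absent by simp
qed

lemma moved_pos_present: "r < nrob c \<Longrightarrow> moved_pos c mv r \<noteq> None"
proof (cases r rule: robot_index_cases)
  case 1
  then show ?thesis using moved_pos_stopped rpos_present leader_bound by simp
next
  case 2
  then show ?thesis using moved_pos_leader rpos_present leader_bound by (cases mv) auto
next
  case 3
  then show ?thesis using moved_pos_follower rprev_present[of "r - 1"] by simp
qed simp

lemma robot_appears_iff: "robot_appears s c mv \<longleftrightarrow> \<not> occupied c s"
  using moved_pos_not_door by (simp add: robot_appears_def)

lemma next_last_left_eq: "next_last_left s c mv = nrob c - 1"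
proof (cases "occupied c s")
  case True
  then obtain r where r: "rpos c r = Some s" by (auto simp: occupied_def)
  have "rpos c r' = Some s \<and> moved_pos c mv r' \<noteq> Some s \<longleftrightarrow> r' = nrob c - 1" for r'
    using rpos_door[OF r] rpos_door[of r'] moved_pos_not_door[of r'] r by (cases "r' = r") auto
  then show ?thesis by (simp add: next_last_left_def)
next
  case False
  then show ?thesis using door_left by (auto simp: next_last_left_def occupied_def)
qed

lemma successor_of_leader:
  "successor_of c k = (if Suc k < nrob c then Some (Suc k) else None)"
proof -
  have "r < nrob c \<and> 0 < r \<and> rpred c r = k \<longleftrightarrow> r = Suc k \<and> Suc k < nrob c" for r
    using rpred_eq[of r] by auto
  then show ?thesis by (simp add: successor_of_def)
qed

lemma last_robot_stops_off_door:
  assumes "mv = None" "nrob c = Suc k"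
  shows "\<not> occupied c s"
proof
  assume "occupied c s"
  then obtain r where r: "rpos c r = Some s" by (auto simp: occupied_def)
  then have "r = k" using rpos_door assms(2) by auto
  then show False using r stopping_leader_off_door assms(1) by simp
qed

lemma next_nrob:
  "nrob (dflf_next s c mv) = (if occupied c s then nrob c else Suc (nrob c))"
  by (simp add: dflf_next_simps robot_appears_iff)

lemma next_rpos:
  "rpos (dflf_next s c mv) r =
     (if \<not> occupied c s \<and> r = nrob c then Some s else moved_pos c mv r)"
  by (simp add: dflf_next_simps robot_appears_iff)

lemma next_rpred:
  "rpred (dflf_next s c mv) r =
     (if \<not> occupied c s \<and> r = nrob c then nrob c - 1 else rpred c r)"
  by (simp add: dflf_next_simps robot_appears_iff next_last_left_eq)

lemma next_last_left: "last_left (dflf_next s c mv) = nrob c - 1"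
  by (simp add: dflf_next_simps next_last_left_eq)

lemma next_leader: "leader (dflf_next s c mv) = Some (if mv = None then Suc k else k)"
proof (cases "mv = None")
  case stops: True
  show ?thesis
  proof (cases "Suc k < nrob c")
    case True
    then show ?thesis using stops leader by (simp add: dflf_next_leader successor_of_leader)
  next
    case False
    then have "nrob c = Suc k" using leader_bound by simp
    then have "robot_appears s c mv" "next_last_left s c mv = k"
      using last_robot_stops_off_door[OF stops] by (simp_all add: robot_appears_iff next_last_left_eq)
    then show ?thesis
      using stops leader \<open>nrob c = Suc k\<close> by (simp add: dflf_next_leader successor_of_leader)
  qed
next
  case False
  then obtain q where "mv = Some q" by blast
  then show ?thesis using leader by (simp add: dflf_next_leader)
qed

lemma next_stopped: "stopped (dflf_next s c mv) = {..< if mv = None then Suc k else k}"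
  using leader stopped_eq[OF leader] by (simp add: dflf_next_simps lessThan_Suc)

lemma next_leader_bound: "(if mv = None then Suc k else k) < nrob (dflf_next s c mv)"
  using leader_bound last_robot_stops_off_door by (cases "nrob c = Suc k") (auto simp: next_nrob)

lemma next_stopped_still:
  assumes "r < (if mv = None then Suc k else k)"
  shows "rpos (dflf_next s c mv) r = rpos c r"
proof -
  have "moved_pos c mv r = rpos c r"
  proof (cases "r < k")
    case True
    then show ?thesis by (rule moved_pos_stopped)
  next
    case False
    with assms have "r = k" "mv = None" by (auto split: if_splits)
    then show ?thesis using moved_pos_leader by simp
  qed
  moreover have "r \<noteq> nrob c" using assms leader_bound by (auto split: if_splits)
  ultimately show ?thesis by (simp add: next_rpos)
qed

lemma next_door_left:
  assumes "\<not> occupied (dflf_next s c mv) s"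
  shows "rprev (dflf_next s c mv) (nrob (dflf_next s c mv) - 1) = Some s \<and>
    last_left (dflf_next s c mv) = nrob (dflf_next s c mv) - 1"
proof -
  have "occupied c s"
    using assms next_rpos[of "nrob c"] unfolding occupied_def by metis
  then obtain r where r: "rpos c r = Some s" by (auto simp: occupied_def)
  then have "r = nrob c - 1" using rpos_door[OF r] by auto
  then show ?thesis using r \<open>occupied c s\<close>
    by (simp add: next_nrob rprev_dflf_next next_last_left)
qed

lemma dflf_inv_next: "dflf_inv s (dflf_next s c mv)"
proof
  let ?c' = "dflf_next s c mv"
  show "rpos ?c' r = None" if "nrob ?c' \<le> r" for r
    using that moved_pos_absent by (auto simp: next_nrob next_rpos split: if_splits)
  show "rprev ?c' r = None" if "nrob ?c' \<le> r" for r
    using that rpos_absent by (auto simp: next_nrob rprev_dflf_next split: if_splits)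
  show "rpos ?c' r \<noteq> None" if "r < nrob ?c'" for r
    using that moved_pos_present by (auto simp: next_nrob next_rpos split: if_splits)
  show "rprev ?c' r \<noteq> None" if "Suc r < nrob ?c'" for r
    using that rpos_present by (auto simp: next_nrob rprev_dflf_next split: if_splits)
  show "rpred ?c' r = r - 1" if "0 < r" "r < nrob ?c'" for r
    using that rpred_eq by (auto simp: next_nrob next_rpred split: if_splits)
  show "\<exists>k. leader ?c' = Some k \<and> k < nrob ?c'"
    using next_leader next_leader_bound by blast
  show "stopped ?c' = {..<k'}" if "leader ?c' = Some k'" for k'
    using that by (simp add: next_leader next_stopped)
  show "rprev ?c' r = rpos ?c' r" if "leader ?c' = Some k'" "r < k'" for k' r
    using that next_stopped_still by (simp add: next_leader rprev_dflf_next)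
  show "Suc r = nrob ?c' \<and> rprev ?c' r = None" if "rpos ?c' r = Some s" for r
    using that moved_pos_not_door rpos_absent
    by (auto simp: next_nrob next_rpos rprev_dflf_next split: if_splits)
  show "Suc r = nrob ?c'" if "rprev ?c' r = Some s" for r
    using that rpos_door by (auto simp: next_nrob rprev_dflf_next occupied_def)
  show "rprev ?c' (nrob ?c' - 1) = Some s \<and> last_left ?c' = nrob ?c' - 1"
    if "\<not> occupied ?c' s"
    using that by (rule next_door_left)
  show "s \<in> visited ?c'" using door_visited by (simp add: visited_dflf_next)
  show "q \<in> visited ?c'" if "rpos ?c' r = Some q" for r q
    using that by (auto simp: visited_dflf_next)
qed

lemma vacated_refilled: "vacated c \<subseteq> {q. occupied (dflf_next s c mv) q}"
proof
  fix q
  assume "q \<in> vacated c"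
  then obtain r where r: "rprev c r = Some q" "rpos c r \<noteq> Some q"
    by (auto simp: vacated_def)
  have "r < nrob c" using r rprev_absent by (metis not_le option.distinct(1))
  moreover have "k \<le> r" using r stopped_still[OF leader] by (metis not_le)
  ultimately consider "r = nrob c - 1" | "k < Suc r" "Suc r < nrob c" by linarith
  then show "q \<in> {q. occupied (dflf_next s c mv) q}"
  proof cases
    case 1
    have door_free: "\<not> occupied c s"
    proof
      assume "occupied c s"
      then obtain r' where r': "rpos c r' = Some s" by (auto simp: occupied_def)
      have "r' = r" "rprev c r' = None" using rpos_door[OF r'] 1 by auto
      with r show False by simp
    qed
    then have "q = s" using door_left 1 r by simp
    then show ?thesis using door_free by (auto simp: occupied_def next_rpos)
  next
    case 2
    then have "rpos (dflf_next s c mv) (Suc r) = Some q"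
      using moved_pos_follower r by (simp add: next_rpos)
    then show ?thesis by (auto simp: occupied_def)
  qed
qed

end

lemma (in dflf_inv) dflf_move_exists:
  assumes "\<not> halting R s c" "leader_choice_ok R c mv"
  obtains k where "dflf_move s c R mv k"
proof -
  obtain k where "leader c = Some k" using leader_present by blast
  then have "dflf_move s c R mv k"
    using assms by unfold_locales auto
  then show thesis by (rule that)
qed

lemma dflf_step_cases:
  assumes "dflf_step R s c c'"
  obtains (idle) "halted c" "c' = c"
  | (halt) "\<not> halted c" "halting R s c" "c' = c\<lparr>halted := True\<rparr>"
  | (move) mv where "\<not> halted c" "\<not> halting R s c" "leader_choice_ok R c mv"
      "c' = dflf_next s c mv"
  using assms unfolding dflf_step_def by (auto split: if_splits)

lemma dflf_inv_step:
  assumes inv: "dflf_inv s c" and step: "dflf_step R s c c'"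
  shows "dflf_inv s c'"
  using step
proof (cases rule: dflf_step_cases)
  case idle
  then show ?thesis using inv by simp
next
  case halt
  then show ?thesis using inv by (simp add: dflf_inv_halt)
next
  case (move mv)
  then obtain k where "dflf_move s c R mv k"
    using dflf_inv.dflf_move_exists[OF inv] by blast
  then show ?thesis using move dflf_move.dflf_inv_next by blast
qed

lemma vacated_refilled_step:
  assumes inv: "dflf_inv s c" and step: "dflf_step R s c c'" and "\<not> halted c"
  shows "vacated c \<subseteq> {q. occupied c' q}"
  using step
proof (cases rule: dflf_step_cases)
  case idle
  then show ?thesis using \<open>\<not> halted c\<close> by simp
next
  case halt
  then show ?thesis using dflf_inv.vacated_empty_if_halting[OF inv] by simp
next
  case (move mv)
  then obtain k where "dflf_move s c R mv k"
    using dflf_inv.dflf_move_exists[OF inv] by blast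
  then show ?thesis using move dflf_move.vacated_refilled by blast
qed

lemma occupied_next_or_vacated:
  assumes "rpos c r = Some q"
  shows "occupied (dflf_next s c mv) q \<or> q \<in> vacated (dflf_next s c mv)"
proof (cases "rpos (dflf_next s c mv) r = Some q")
  case True
  then show ?thesis by (auto simp: occupied_def)
next
  case False
  then show ?thesis using assms by (auto simp: vacated_def rprev_dflf_next)
qed

lemma visited_covered_step:
  assumes inv: "dflf_inv s c" and cov: "visited_covered c" and step: "dflf_step R s c c'"
  shows "visited_covered c'"
  using step
proof (cases rule: dflf_step_cases)
  case idle
  then show ?thesis using cov by simp
next
  case halt
  then show ?thesis
    using cov dflf_inv.vacated_empty_if_halting[OF inv]
    by (simp add: visited_covered_def occupied_def)
next
  case (move mv)
  have "q \<in> {q. occupied c' q} \<union> vacated c'" if "q \<in> visited c'" for q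
  proof (cases "q \<in> visited c")
    case True
    then consider r where "rpos c r = Some q" | "q \<in> vacated c"
      using cov move(1) by (auto simp: visited_covered_def occupied_def)
    then show ?thesis
    proof cases
      case 1
      then show ?thesis using occupied_next_or_vacated move(4) by blast
    next
      case 2
      then show ?thesis using vacated_refilled_step[OF inv step move(1)] by blast
    qed
  next
    case False
    then show ?thesis using that move(4) by (auto simp: visited_dflf_next occupied_def)
  qed
  then show ?thesis using move(4) by (auto simp: visited_covered_def dflf_next_simps)
qed

lemma dflf_run_step: "dflf_run R s \<sigma> \<Longrightarrow> dflf_step R s (\<sigma> t) (\<sigma> (Suc t))"
  by (simp add: dflf_run_def)

lemma dflf_run_inv:
  assumes "dflf_run R s \<sigma>"
  shows "dflf_inv s (\<sigma> t)"
proof (induction t)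
  case 0
  then show ?case using assms dflf_inv_init by (simp add: dflf_run_def)
next
  case (Suc t)
  then show ?case using dflf_run_step[OF assms] by (rule dflf_inv_step)
qed

lemma dflf_run_visited_covered:
  assumes "dflf_run R s \<sigma>"
  shows "visited_covered (\<sigma> t)"
proof (induction t)
  case 0
  then show ?case
    using assms by (simp add: dflf_run_def visited_covered_def dflf_init_def occupied_def)
next
  case (Suc t)
  show ?case by (rule visited_covered_step[OF dflf_run_inv[OF assms] Suc dflf_run_step[OF assms]])
qed

lemma dflf_step_visited_mono: "dflf_step R s c c' \<Longrightarrow> visited c \<subseteq> visited c'"
  by (cases rule: dflf_step_cases) (auto simp: visited_dflf_next)

lemma dflf_run_visited_mono:
  assumes "dflf_run R s \<sigma>" "t1 \<le> t2"
  shows "visited (\<sigma> t1) \<subseteq> visited (\<sigma> t2)"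
proof -
  have "visited (\<sigma> t) \<subseteq> visited (\<sigma> (Suc t))" for t
    using dflf_run_step[OF assms(1)] by (rule dflf_step_visited_mono)
  then show ?thesis by (rule lift_Suc_mono_le[of "\<lambda>t. visited (\<sigma> t)", OF _ assms(2)])
qed

theorem mainTheorem2:
  fixes R :: "pixel set" and s q :: pixel and \<sigma> :: "nat \<Rightarrow> config" and t :: nat
  assumes "finite R" and "grid_connected R" and "s \<in> R"
    and "dflf_run R s \<sigma>"
    and "q \<in> R"
    and "\<not> occupied (\<sigma> t) q" and "\<not> occupied (\<sigma> (Suc t)) q"
  shows "\<forall>t' < t. \<not> occupied (\<sigma> t') q"
proof (intro allI impI notI)
  fix t'
  assume "t' < t" and "occupied (\<sigma> t') q"
  then obtain r where "rpos (\<sigma> t') r = Some q" by (auto simp: occupied_def)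
  then have "q \<in> visited (\<sigma> t')"
    by (rule dflf_inv.rpos_visited[OF dflf_run_inv[OF assms(4)]])
  then have "q \<in> visited (\<sigma> t)"
    using dflf_run_visited_mono[OF assms(4), of t' t] \<open>t' < t\<close> by auto
  then have "q \<in> vacated (\<sigma> t)" and "\<not> halted (\<sigma> t)"
    using dflf_run_visited_covered[OF assms(4), of t] assms(6)
    by (auto simp: visited_covered_def split: if_splits)
  then have "occupied (\<sigma> (Suc t)) q"
    using vacated_refilled_step[OF dflf_run_inv[OF assms(4)] dflf_run_step[OF assms(4)]] by blast
  then show False using assms(7) by contradiction
qed

end
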